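(* Let $K$ be a virtual knotoid diagram, let $s$ be a state of $K$, and let $G^s_K$ be the associated marked ribbon graph decorated with signs and arrows. Let $e_+$ and $e_-$ be the numbers of positive and negative edges of $G^s_K$, and define edge weights $b_e=B/A$ if $e$ is positive and $b_e=A/B$ if $e$ is negative. Then \[\langle K\rangle=\frac{A^{e_+}B^{e_-}}{d}\,R_{G^s_K}(1,\mathbf b,d),\] and consequently \[\langle K\rangle_A=\frac{A^{e_+-e_-}}{-A^2-A^{-2}}\,R_{G^s_K}\big(1,\mathbf b|_{B=A^{-1}},-A^2-A^{-2}\big).\]
   Context: Write $I=[0,1]$. A virtual knotoid diagram is an immersion of $I$ into $S^2$ whose singularities are finitely many transversal double points, each decorated either as a classical crossing (with over/under information) or as a virtual crossing; tail = image of $0$, head = image of $1$, oriented tail to head. Oriented state expansion: at each classical crossing there are two smoothings, the Kauffman $A$-smoothing and $B$-smoothing. Exactly one is compatible with the orientation (oriented smoothing); the other (disoriented) reverses the orientation along its arcs, and at each of the two points of reversal an arrow (a mark pointing in one direction along the curve) is placed, oriented counterclockwise around the former crossing. A state $s$ is a choice of smoothing at every classical crossing; it consists of loop components and one arc component (possibly with virtual crossings), decorated with arrows. Reduction: virtual moves (arrows pass virtual crossings) and cancellation of two consecutive arrows pointing in the same direction along a component. Each loop reduces to $K_i$ (a loop with $2i$ alternating arrows, $i\ge0$), and the arc reduces to $\Lambda_i$ or $\Lambda_i'$ (an arc with $2i$ alternating arrows whose first arrow from the tail points along, respectively against, the orientation at the tail). The arrow bracket is \[\langle K\rangle=\sum_s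 A^{a(s)}B^{b(s)}\prod_{\text{loops }C}d\,K_{i(C)}\cdot\Lambda^{(\prime)}_{j(s)}\in\mathbb Z[A,B,d,\{K_i,\Lambda_i,\Lambda_i'\}],\] where $a(s),b(s)$ are the numbers of $A$- and $B$-smoothings, $K_0=\Lambda_0=\Lambda_0'=1$, and $K_i,\Lambda_i,\Lambda_i'$ are commuting variables. The arrow polynomial $\langle K\rangle_A$ is its specialization at $B=A^{-1}$, $d=-A^2-A^{-2}$. A ribbon graph is a surface that is a union of vertex discs and edge discs, each edge disc meeting vertex discs in exactly two disjoint segments (attaching arcs); a marked vertex carries a marking (a boundary point away from attaching arcs) and an orientation of its boundary. The marked ribbon graph $G^s_K$: vertices are discs bounded by the state components of $s$, the arc component giving the marked vertex whose boundary is the arc closed up through the marking joining its endpoints, oriented tail to head. Edges correspond to classical crossings: at each smoothing site a small planar ribbon joins the two opposite arcs of the smoothing. Sign $+$ if $s$ uses the $A$-smoothing there, $-$ otherwise. Each edge gets two arrows running counterclockwise: if the smoothing is oriented, one on each edge boundary arc not meeting a vertex; if disoriented, one on each attaching arc. For a spanning subgraph $F\subseteq E(G)$ of a marked ribbon graph $G$ with one marked vertex, $k(F)$ is its number of components and $\mathrm{bc}(F)$ its number of boundary components; one boundary component passes through the marking, the others form $\partial^c(F)$. After cancelling consecutive equally-directed arrows, a circular component has $2j$ alternating arrows and contributes $K_j$; the marked component, read from the marking along the orientation, contributes $\Lambda_j$ or $\Lambda_j'$ according as its first arrow points along or against the orientation. The arrow Bollobás–Riordan polynomial is \[R_G(a,\mathbf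 b,c)=\sum_{F\subseteq E(G)}a^{k(F)}\Big(\prod_{e\in F}b_e\Big)c^{\mathrm{bc}(F)}\Big(\prod_{f\in\partial^c(F)}K_{j(f)}\Big)\Lambda^{(\prime)}_{j(F)}.\] *)

theory Defs
  imports Main
begin

text \<open>An arc-graph is a set X of arcs (identifiers of type 'x), each with two
endpoints (ends :: 'x => 'p * 'p) and possibly an arrow, given as the endpoint
the arrow points towards (arw :: 'x => 'p option).  Curves (state components,
boundary components of ribbon graphs) are the connected components of such
arc-graphs; every point has degree 2 (or 1 at the tail/head of a knotoid).\<close>

definition pts :: "'x set \<Rightarrow> ('x \<Rightarrow> 'p \<times> 'p) \<Rightarrow> 'p set" where
  "pts X en = fst ` en ` X \<union> snd ` en ` X"

definition adj :: "'x set \<Rightarrow> ('x \<Rightarrow> 'p \<times> 'p) \<Rightarrow> 'p \<Rightarrow> 'p \<Rightarrow> bool" where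
  "adj X en u v \<longleftrightarrow> (\<exists>x\<in>X. en x = (u, v) \<or> en x = (v, u))"

definition comp_of :: "'x set \<Rightarrow> ('x \<Rightarrow> 'p \<times> 'p) \<Rightarrow> 'p \<Rightarrow> 'p set" where
  "comp_of X en p = {q. (adj X en)\<^sup>*\<^sup>* p q}"

definition comps :: "'x set \<Rightarrow> ('x \<Rightarrow> 'p \<times> 'p) \<Rightarrow> 'p set set" where
  "comps X en = comp_of X en ` pts X en"

text \<open>A trail: a list of traversed arcs (x, u, v) -- arc x traversed from u to v --
using distinct arcs, consecutive traversals being joined.\<close>
definition is_trail :: "'x set \<Rightarrow> ('x \<Rightarrow> 'p \<times> 'p) \<Rightarrow> ('x \<times> 'p \<times> 'p) list \<Rightarrow> bool" where
  "is_trail X en ts \<longleftrightarrow>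
     (\<forall>(x, u, v) \<in> set ts. x \<in> X \<and> (en x = (u, v) \<or> en x = (v, u))) \<and>
     distinct (map fst ts) \<and>
     (\<forall>i. Suc i < length ts \<longrightarrow> snd (snd (ts ! i)) = fst (snd (ts ! Suc i)))"

definition arcs_in :: "'x set \<Rightarrow> ('x \<Rightarrow> 'p \<times> 'p) \<Rightarrow> 'p set \<Rightarrow> 'x set" where
  "arcs_in X en C = {x \<in> X. fst (en x) \<in> C}"

definition closed_traversal :: "'x set \<Rightarrow> ('x \<Rightarrow> 'p \<times> 'p) \<Rightarrow> 'p set \<Rightarrow> ('x \<times> 'p \<times> 'p) list \<Rightarrow> bool" where
  "closed_traversal X en C ts \<longleftrightarrow> is_trail X en ts \<and> ts \<noteq> [] \<and>
     snd (snd (last ts)) = fst (snd (hd ts)) \<and> set (map fst ts) = arcs_in X en C"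

text \<open>Arrow word read along a traversal: True = the arrow points along the direction
of traversal, False = against it.\<close>
definition arrow_word :: "('x \<Rightarrow> 'p option) \<Rightarrow> ('x \<times> 'p \<times> 'p) list \<Rightarrow> bool list" where
  "arrow_word ar ts = concat (map (\<lambda>(x, u, v). case ar x of None \<Rightarrow> [] | Some p \<Rightarrow> [p = v]) ts)"

text \<open>Cancellation of two consecutive arrows pointing in the same direction: on an arc
(linear word) and on a circle (cyclic word, where the last and first arrow are consecutive).\<close>
definition lin_step :: "bool list \<Rightarrow> bool list \<Rightarrow> bool" where
  "lin_step w w' \<longleftrightarrow> (\<exists>u v a. w = u @ a # a # v \<and> w' = u @ v)"

definition cyc_step :: "bool list \<Rightarrow> bool list \<Rightarrow> bool" where
  "cyc_step w w' \<longleftrightarrow> lin_step w w' \<or> (\<exists>u a. w = a # u @ [a] \<and> w' = u)"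

definition lin_reduced :: "bool list \<Rightarrow> bool list \<Rightarrow> bool" where
  "lin_reduced w r \<longleftrightarrow> lin_step\<^sup>*\<^sup>* w r \<and> \<not> (\<exists>r'. lin_step r r')"

definition cyc_reduced :: "bool list \<Rightarrow> bool list \<Rightarrow> bool" where
  "cyc_reduced w r \<longleftrightarrow> cyc_step\<^sup>*\<^sup>* w r \<and> \<not> (\<exists>r'. cyc_step r r')"

text \<open>Index i of K_i for a circular component C (reduced word has 2i arrows).\<close>
definition loop_index :: "'x set \<Rightarrow> ('x \<Rightarrow> 'p \<times> 'p) \<Rightarrow> ('x \<Rightarrow> 'p option) \<Rightarrow> 'p set \<Rightarrow> nat" where
  "loop_index X en ar C =
     length (SOME r. \<exists>ts. closed_traversal X en C ts \<and> cyc_reduced (arrow_word ar ts) r) div 2"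

text \<open>Value of the marked/arc component whose arrow word is w:
 Lambda_j if the reduced word (2j arrows) starts with an arrow along the orientation,
 Lambda'_j if against; 1 (= Lambda_0 = Lambda'_0) if no arrows remain.\<close>
definition lam_value :: "(nat \<Rightarrow> 'a::field) \<Rightarrow> (nat \<Rightarrow> 'a) \<Rightarrow> bool list \<Rightarrow> 'a" where
  "lam_value L L' r = (if r = [] then 1 else if hd r then L (length r div 2) else L' (length r div 2))"

text \<open>Boundary arcs of a ribbon graph: VA = free arc of a vertex boundary
(not meeting an edge), AT e = attaching arc of edge e (2 per edge),
SD e = side of the edge disc of e not meeting a vertex (2 per edge).
The surface is determined by how these arcs are glued at their endpoints.\<close>
datatype arck = VA | AT nat | SD nat

record ('x, 'p) mrgraph =
  rarcs  :: "'x set"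
  rends  :: "'x \<Rightarrow> 'p \<times> 'p"
  rkind  :: "'x \<Rightarrow> arck"
  rarw   :: "'x \<Rightarrow> 'p option"
  rmark  :: "'x"            \<comment> \<open>free arc of the marked vertex carrying the marking; the
                                 boundary orientation runs from fst to snd of its ends\<close>
  redges :: "nat set"
  rsign  :: "nat \<Rightarrow> bool"  \<comment> \<open>True = positive edge\<close>

text \<open>Arcs of the spanning subgraph F (all vertex discs plus edge discs of F)
and arcs of its boundary.\<close>
definition sub_arcs :: "('x, 'p) mrgraph \<Rightarrow> nat set \<Rightarrow> 'x set" where
  "sub_arcs G F = {x \<in> rarcs G. case rkind G x of VA \<Rightarrow> True | AT e \<Rightarrow> True | SD e \<Rightarrow> e \<in> F}"

definition bnd_arcs :: "('x, 'p) mrgraph \<Rightarrow> nat set \<Rightarrow> 'x set" where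
  "bnd_arcs G F = {x \<in> rarcs G. case rkind G x of VA \<Rightarrow> True | AT e \<Rightarrow> e \<notin> F | SD e \<Rightarrow> e \<in> F}"

definition kcomp :: "('x, 'p) mrgraph \<Rightarrow> nat set \<Rightarrow> nat" where
  "kcomp G F = card (comps (sub_arcs G F) (rends G))"

definition bc :: "('x, 'p) mrgraph \<Rightarrow> nat set \<Rightarrow> nat" where
  "bc G F = card (comps (bnd_arcs G F) (rends G))"

definition marked_bcomp :: "('x, 'p) mrgraph \<Rightarrow> nat set \<Rightarrow> 'p set" where
  "marked_bcomp G F = comp_of (bnd_arcs G F) (rends G) (fst (rends G (rmark G)))"

definition marked_value :: "('x, 'p) mrgraph \<Rightarrow> nat set \<Rightarrow> (nat \<Rightarrow> 'a::field) \<Rightarrow> (nat \<Rightarrow> 'a) \<Rightarrow> 'a" where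
  "marked_value G F L L' = lam_value L L'
     (SOME r. \<exists>ts. closed_traversal (bnd_arcs G F) (rends G) (marked_bcomp G F) ts \<and>
         hd ts = (rmark G, rends G (rmark G)) \<and>
         lin_reduced (arrow_word (rarw G) ts) r)"

definition arrowBR :: "('x, 'p) mrgraph \<Rightarrow> 'a::field \<Rightarrow> (nat \<Rightarrow> 'a) \<Rightarrow> 'a \<Rightarrow>
    (nat \<Rightarrow> 'a) \<Rightarrow> (nat \<Rightarrow> 'a) \<Rightarrow> (nat \<Rightarrow> 'a) \<Rightarrow> 'a" where
  "arrowBR G a b c K L L' = (\<Sum>F \<in> Pow (redges G).
      a ^ kcomp G F * (\<Prod>e\<in>F. b e) * c ^ bc G F *
      (\<Prod>C \<in> comps (bnd_arcs G F) (rends G) - {marked_bcomp G F}.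
          K (loop_index (bnd_arcs G F) (rends G) (rarw G) C)) *
      marked_value G F L L')"

definition epos :: "('x, 'p) mrgraph \<Rightarrow> nat" where
  "epos G = card {e \<in> redges G. rsign G e}"

definition eneg :: "('x, 'p) mrgraph \<Rightarrow> nat" where
  "eneg G = card {e \<in> redges G. \<not> rsign G e}"

text \<open>Virtual knotoid diagrams up to virtual moves are encoded by their Gauss code:
the classical crossings met along the curve from tail to head.  Passage i is the i-th
passage through a classical crossing; code ! i = (c, ov) means it passes crossing c,
over if ov.  sgn c = True iff crossing c is positive.  Virtual crossings are not
recorded (both sides of the theorem are insensitive to them).\<close>
record kdiag =
  code :: "(nat \<times> bool) list"
  sgn  :: "nat \<Rightarrow> bool"

definition ncross :: "kdiag \<Rightarrow> nat" where
  "ncross D = length (code D) div 2"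

definition wf_kdiag :: "kdiag \<Rightarrow> bool" where
  "wf_kdiag D \<longleftrightarrow> even (length (code D)) \<and>
     (\<forall>i < length (code D). fst (code D ! i) < ncross D) \<and>
     (\<forall>c < ncross D. \<exists>p q. p < length (code D) \<and> q < length (code D) \<and>
         code D ! p = (c, True) \<and> code D ! q = (c, False) \<and>
         {i. i < length (code D) \<and> fst (code D ! i) = c} = {p, q})"

definition opass :: "kdiag \<Rightarrow> nat \<Rightarrow> nat" where
  "opass D c = (THE p. p < length (code D) \<and> code D ! p = (c, True))"

definition upass :: "kdiag \<Rightarrow> nat \<Rightarrow> nat" where
  "upass D c = (THE q. q < length (code D) \<and> code D ! q = (c, False))"

text \<open>Ends: the tail, the head, and for each passage i the incoming end In i and the
outgoing end Out i of the strand at the crossing.\<close>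
datatype pt = Tail | Head | In nat | Out nat

text \<open>Arcs: Seg i = piece of the curve before passage i (Seg (length code) ends at the
head); Mk = arc closing the knotoid arc through the marking (head to tail);
Sm c a k = the two arcs (k) of the A-smoothing (a = True) or B-smoothing (a = False)
at crossing c.\<close>
datatype darc = Seg nat | Mk | Sm nat bool bool

definition seg_ends :: "kdiag \<Rightarrow> nat \<Rightarrow> pt \<times> pt" where
  "seg_ends D i = (if i = 0 then Tail else Out (i - 1), if i = length (code D) then Head else In i)"

text \<open>Local picture at crossing c (over passage p, under passage q).  Counterclockwise
order of the ends: positive: Out p, Out q, In p, In q; negative: Out p, In q, In p, Out q.
A-smoothing joins each over end to its clockwise neighbour, B-smoothing to its
counterclockwise neighbour (Kauffman's convention: A-regions are swept by rotating the
over strand counterclockwise).\<close>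
definition sm_ends :: "kdiag \<Rightarrow> nat \<Rightarrow> bool \<Rightarrow> bool \<Rightarrow> pt \<times> pt" where
  "sm_ends D c a k =
    (let p = opass D c; q = upass D c;
         cwo = (if sgn D c then In q else Out q);   \<comment> \<open>clockwise neighbour of Out p\<close>
         cwi = (if sgn D c then Out q else In q)    \<comment> \<open>clockwise neighbour of In p\<close>
     in if a then (if k then (Out p, cwo) else (In p, cwi))
             else (if k then (Out p, cwi) else (In p, cwo)))"

text \<open>Arrows on the arcs of the disoriented smoothing (B for positive, A for negative
crossings), pointing counterclockwise around the crossing.\<close>
definition sm_arw :: "kdiag \<Rightarrow> nat \<Rightarrow> bool \<Rightarrow> bool \<Rightarrow> pt option" where
  "sm_arw D c a k =
    (if a = sgn D c then None
     else if a then Some (fst (sm_ends D c a k)) else Some (snd (sm_ends D c a k)))"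

definition d_ends :: "kdiag \<Rightarrow> darc \<Rightarrow> pt \<times> pt" where
  "d_ends D x = (case x of Seg i \<Rightarrow> seg_ends D i | Mk \<Rightarrow> (Head, Tail) | Sm c a k \<Rightarrow> sm_ends D c a k)"

definition d_arw :: "kdiag \<Rightarrow> darc \<Rightarrow> pt option" where
  "d_arw D x = (case x of Sm c a k \<Rightarrow> sm_arw D c a k | _ \<Rightarrow> None)"

text \<open>A state is given by the set S of crossings receiving the A-smoothing.
Its arcs: the curve pieces and the smoothing arcs.\<close>
definition state_arcs :: "kdiag \<Rightarrow> nat set \<Rightarrow> darc set" where
  "state_arcs D S = {Seg i | i. i \<le> length (code D)} \<union>
                    {Sm c a k | c a k. c < ncross D \<and> (a \<longleftrightarrow> c \<in> S)}"

definition arc_comp :: "kdiag \<Rightarrow> nat set \<Rightarrow> pt set" where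
  "arc_comp D S = comp_of (state_arcs D S) (d_ends D) Tail"

definition state_loops :: "kdiag \<Rightarrow> nat set \<Rightarrow> pt set set" where
  "state_loops D S = comps (state_arcs D S) (d_ends D) - {arc_comp D S}"

definition arc_value :: "kdiag \<Rightarrow> nat set \<Rightarrow> (nat \<Rightarrow> 'a::field) \<Rightarrow> (nat \<Rightarrow> 'a) \<Rightarrow> 'a" where
  "arc_value D S L L' = lam_value L L'
     (SOME r. \<exists>ts. is_trail (state_arcs D S) (d_ends D) ts \<and> ts \<noteq> [] \<and>
        fst (snd (hd ts)) = Tail \<and> snd (snd (last ts)) = Head \<and>
        set (map fst ts) = arcs_in (state_arcs D S) (d_ends D) (arc_comp D S) \<and>
        lin_reduced (arrow_word (d_arw D) ts) r)"

definition arrow_bracket :: "kdiag \<Rightarrow> 'a::field \<Rightarrow> 'a \<Rightarrow> 'a \<Rightarrow>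
    (nat \<Rightarrow> 'a) \<Rightarrow> (nat \<Rightarrow> 'a) \<Rightarrow> (nat \<Rightarrow> 'a) \<Rightarrow> 'a" where
  "arrow_bracket D A B d K L L' = (\<Sum>S \<in> Pow {0..<ncross D}.
      A ^ card S * B ^ (ncross D - card S) *
      (\<Prod>C \<in> state_loops D S. d * K (loop_index (state_arcs D S) (d_ends D) (d_arw D) C)) *
      arc_value D S L L')"

definition arrow_poly :: "kdiag \<Rightarrow> 'a::field \<Rightarrow> (nat \<Rightarrow> 'a) \<Rightarrow> (nat \<Rightarrow> 'a) \<Rightarrow> (nat \<Rightarrow> 'a) \<Rightarrow> 'a" where
  "arrow_poly D A K L L' = arrow_bracket D A (inverse A) (- (A ^ 2) - inverse A ^ 2) K L L'"

text \<open>The marked ribbon graph G^s_K of the state s = S: vertices bounded by the state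
components (the arc component closed through the marking arc Mk, oriented tail to
head), one edge per classical crossing whose attaching arcs are the arcs of the chosen
smoothing and whose sides are the arcs of the other smoothing; positive iff S uses the
A-smoothing; arrows (counterclockwise) on the arcs of the disoriented smoothing, i.e.
on the sides if s is oriented there and on the attaching arcs otherwise.\<close>
definition ribbon :: "kdiag \<Rightarrow> nat set \<Rightarrow> (darc, pt) mrgraph" where
  "ribbon D S = \<lparr> rarcs = {Seg i | i. i \<le> length (code D)} \<union> {Mk} \<union>
                         {Sm c a k | c a k. c < ncross D},
                 rends = d_ends D,
                 rkind = (\<lambda>x. case x of Sm c a k \<Rightarrow> (if (a \<longleftrightarrow> c \<in> S) then AT c else SD c) | _ \<Rightarrow> VA),
                 rarw = d_arw D,
                 rmark = Mk,
                 redges = {0..<ncross D},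
                 rsign = (\<lambda>c. c \<in> S) \<rparr>"

end

theory Submission
  imports Defs
begin

text \<open>For a spanning subgraph \<open>F\<close> of \<open>G^s_K\<close>, the boundary of the
vertex discs together with the edge discs of \<open>F\<close> consists exactly of the state curves of the
state \<open>S \<triangle> F\<close> (obtained from \<open>s\<close> by switching the smoothings at the crossings of \<open>F\<close>), the arc
component being closed up through the marking, with the same arrows.  The closing arc joins
tail and head, which already lie on one state curve: by the handshake lemma a component
containing the tail, the only point of odd degree besides the head, must contain the head.
So the boundary components are the state loops plus one marked component, whence
\<open>c^{bc(F)} = d \<cdot> d^{#loops}\<close>, the marked value is the arc value, and the edge weights
\<open>B/A\<close>, \<open>A/B\<close> turn \<open>A^{e_+} B^{e_-}\<close> into \<open>A^{a(S \<triangle> F)} B^{b(S \<triangle> F)}\<close>.  Since \<open>F \<mapsto> S \<triangle> F\<close>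
is a bijection of the power set of the crossings, the two sums agree term by term.\<close>

section \<open>Components of arc-graphs\<close>

lemma symp_adj: "symp (adj X en)"
  unfolding adj_def by (rule sympI) blast

lemma rtranclp_adj_commute: "(adj X en)\<^sup>*\<^sup>* u v \<Longrightarrow> (adj X en)\<^sup>*\<^sup>* v u"
  by (rule sympD[OF symp_rtranclp[OF symp_adj]])

lemma adj_in_pts: "adj X en u v \<Longrightarrow> v \<in> pts X en"
  unfolding adj_def pts_def by (auto intro: rev_image_eqI)

lemma comp_of_subset: "comp_of X en p \<subseteq> insert p (pts X en)"
proof
  fix q assume "q \<in> comp_of X en p"
  then have "(adj X en)\<^sup>*\<^sup>* p q" by (simp add: comp_of_def)
  then show "q \<in> insert p (pts X en)"
    by (cases rule: rtranclp.cases) (auto dest: adj_in_pts)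
qed

lemma finite_comp_of: "finite X \<Longrightarrow> finite (comp_of X en p)"
  by (rule finite_subset[OF comp_of_subset]) (simp add: pts_def)

lemma comp_of_closed: "q \<in> comp_of X en p \<Longrightarrow> adj X en q r \<Longrightarrow> r \<in> comp_of X en p"
  unfolding comp_of_def by (auto intro: rtranclp.rtrancl_into_rtrancl)

lemma comp_of_eq: "q \<in> comp_of X en p \<Longrightarrow> comp_of X en q = comp_of X en p"
  unfolding comp_of_def
  by (auto intro: rtranclp_trans dest: rtranclp_adj_commute)

definition deg :: "'x set \<Rightarrow> ('x \<Rightarrow> 'p \<times> 'p) \<Rightarrow> 'p \<Rightarrow> nat" where
  "deg X en q = (\<Sum>x\<in>X. of_bool (fst (en x) = q) + of_bool (snd (en x) = q))"

lemma even_sum_deg_comp_of: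
  assumes "finite X"
  shows "even (\<Sum>q\<in>comp_of X en p. deg X en q)"
proof -
  let ?C = "comp_of X en p"
  have count: "(\<Sum>q\<in>?C. of_bool (a = q)) = (of_bool (a \<in> ?C) :: nat)" for a
    unfolding of_bool_def by (rule sum.delta'[OF finite_comp_of[OF assms]])
  have "(\<Sum>q\<in>?C. deg X en q) = (\<Sum>x\<in>X. of_bool (fst (en x) \<in> ?C) + of_bool (snd (en x) \<in> ?C))"
    unfolding deg_def by (subst sum.swap) (simp add: sum.distrib count)
  moreover have "fst (en x) \<in> ?C \<longleftrightarrow> snd (en x) \<in> ?C" if "x \<in> X" for x
  proof -
    have "adj X en (fst (en x)) (snd (en x))"
      unfolding adj_def using that by (intro bexI[of _ x]) simp_all
    then show ?thesis
      using comp_of_closed symp_adj by (metis sympD)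
  qed
  ultimately show ?thesis by (simp add: dvd_sum)
qed

lemma odd_deg_connected:
  assumes "finite X" and "odd (deg X en t)"
    and "\<And>q. q \<noteq> t \<Longrightarrow> q \<noteq> h \<Longrightarrow> even (deg X en q)"
  shows "h \<in> comp_of X en t"
proof (rule ccontr)
  assume h: "h \<notin> comp_of X en t"
  let ?C = "comp_of X en t"
  have "t \<in> ?C" by (simp add: comp_of_def)
  then have "(\<Sum>q\<in>?C. deg X en q) = deg X en t + (\<Sum>q\<in>?C - {t}. deg X en q)"
    using finite_comp_of[OF assms(1)] by (rule sum.remove[rotated])
  moreover have "even (\<Sum>q\<in>?C - {t}. deg X en q)"
    using h assms(3) by (intro dvd_sum) blast
  ultimately show False
    using assms(2) even_sum_deg_comp_of[OF assms(1), of en t] by simp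
qed

lemma rtranclp_adj_insert:
  assumes "en m = (h, t)" "(adj X en)\<^sup>*\<^sup>* t h"
  shows "(adj (insert m X) en)\<^sup>*\<^sup>* u v \<longleftrightarrow> (adj X en)\<^sup>*\<^sup>* u v"
proof
  assume "(adj (insert m X) en)\<^sup>*\<^sup>* u v"
  then show "(adj X en)\<^sup>*\<^sup>* u v"
  proof (induction rule: rtranclp_induct)
    case (step y z)
    have "adj X en y z \<or> en m = (y, z) \<or> en m = (z, y)"
      using step(2) unfolding adj_def by blast
    then have "(adj X en)\<^sup>*\<^sup>* y z"
      using assms rtranclp_adj_commute[OF assms(2)] by auto
    with step.IH show ?case by (rule rtranclp_trans)
  qed simp
next
  assume "(adj X en)\<^sup>*\<^sup>* u v"
  moreover have "adj X en \<le> adj (insert m X) en" unfolding adj_def by blast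
  ultimately show "(adj (insert m X) en)\<^sup>*\<^sup>* u v" by (rule rtranclp_mono[THEN predicate2D, rotated])
qed

lemma comp_of_insert:
  assumes "en m = (h, t)" "(adj X en)\<^sup>*\<^sup>* t h"
  shows "comp_of (insert m X) en p = comp_of X en p"
  unfolding comp_of_def using rtranclp_adj_insert[OF assms] by blast

lemma comps_insert:
  assumes "en m = (h, t)" "(adj X en)\<^sup>*\<^sup>* t h" "h \<in> pts X en" "t \<in> pts X en"
  shows "comps (insert m X) en = comps X en"
proof -
  have "pts (insert m X) en = pts X en"
    using assms unfolding pts_def by auto
  then show ?thesis unfolding comps_def comp_of_insert[OF assms(1,2)] by simp
qed

lemma is_trail_mono: "is_trail X en ts \<Longrightarrow> fst ` set ts \<subseteq> Y \<Longrightarrow> is_trail Y en ts"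
  unfolding is_trail_def by fastforce

lemma is_trail_subset: "is_trail X en ts \<Longrightarrow> fst ` set ts \<subseteq> X"
  unfolding is_trail_def by fastforce

lemma is_trail_Cons:
  "is_trail X en ((x, u, v) # ts) \<longleftrightarrow>
     x \<in> X \<and> (en x = (u, v) \<or> en x = (v, u)) \<and> x \<notin> fst ` set ts \<and> is_trail X en ts \<and>
     (ts \<noteq> [] \<longrightarrow> v = fst (snd (hd ts)))"
proof -
  have "is_trail X en ts \<longleftrightarrow> (\<forall>(x, u, v) \<in> set ts. x \<in> X \<and> (en x = (u, v) \<or> en x = (v, u))) \<and>
      distinct (map fst ts) \<and> successively (\<lambda>a b. snd (snd a) = fst (snd b)) ts" for ts
    unfolding is_trail_def successively_conv_nth ..
  then show ?thesis by (auto simp: successively_Cons)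
qed

lemma loop_index_insert:
  assumes "fst (en m) \<notin> C"
  shows "loop_index (insert m X) en ar C = loop_index X en ar C"
proof -
  have arcs: "arcs_in (insert m X) en C = arcs_in X en C"
    using assms unfolding arcs_in_def by auto
  have "fst ` set ts \<subseteq> X" if "set (map fst ts) = arcs_in X en C" for ts
    using that unfolding arcs_in_def by auto
  then have "closed_traversal (insert m X) en C ts \<longleftrightarrow> closed_traversal X en C ts" for ts
    unfolding closed_traversal_def arcs by (meson is_trail_mono subset_insertI2)
  then show ?thesis unfolding loop_index_def by simp
qed

lemma closed_traversal_Cons_iff:
  assumes m: "en m = (h, t)" "m \<notin> X" and "h \<in> C" "h \<noteq> t"
  shows "closed_traversal (insert m X) en C ((m, h, t) # ts) \<longleftrightarrow>
    is_trail X en ts \<and> ts \<noteq> [] \<and> fst (snd (hd ts)) = t \<and> snd (snd (last ts)) = h \<and>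
    set (map fst ts) = arcs_in X en C"
proof -
  have arcs: "arcs_in (insert m X) en C = insert m (arcs_in X en C)"
    using assms unfolding arcs_in_def by auto
  have m_notin: "m \<notin> arcs_in X en C" using m unfolding arcs_in_def by simp
  show ?thesis
  proof
    assume ct: "closed_traversal (insert m X) en C ((m, h, t) # ts)"
    then have tr: "is_trail (insert m X) en ts" "m \<notin> fst ` set ts"
      "ts \<noteq> [] \<longrightarrow> t = fst (snd (hd ts))"
      by (simp_all add: closed_traversal_def is_trail_Cons)
    have ne: "ts \<noteq> []" using ct \<open>h \<noteq> t\<close> by (auto simp: closed_traversal_def)
    have "insert m (set (map fst ts)) = insert m (arcs_in X en C)"
      using ct arcs by (simp add: closed_traversal_def)
    then have set: "set (map fst ts) = arcs_in X en C"
      using tr(2) m_notin by (simp add: insert_ident)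
    then have "fst ` set ts \<subseteq> X" by (auto simp: arcs_in_def)
    with tr(1) have "is_trail X en ts" by (rule is_trail_mono)
    then show "is_trail X en ts \<and> ts \<noteq> [] \<and> fst (snd (hd ts)) = t \<and> snd (snd (last ts)) = h \<and>
        set (map fst ts) = arcs_in X en C"
      using ct tr(3) ne set by (auto simp: closed_traversal_def)
  next
    assume "is_trail X en ts \<and> ts \<noteq> [] \<and> fst (snd (hd ts)) = t \<and> snd (snd (last ts)) = h \<and>
        set (map fst ts) = arcs_in X en C"
    then show "closed_traversal (insert m X) en C ((m, h, t) # ts)"
      using is_trail_subset[of X en ts] is_trail_mono[of X en ts "insert m X"] m arcs
      by (auto simp: closed_traversal_def is_trail_Cons)
  qed
qed

lemma ex_closed_traversal_iff_ex_trail: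
  assumes "en m = (h, t)" "m \<notin> X" "h \<in> C" "h \<noteq> t" "ar m = None"
  shows "(\<exists>ts. closed_traversal (insert m X) en C ts \<and> hd ts = (m, h, t) \<and> P (arrow_word ar ts)) \<longleftrightarrow>
    (\<exists>ts. is_trail X en ts \<and> ts \<noteq> [] \<and> fst (snd (hd ts)) = t \<and> snd (snd (last ts)) = h \<and>
        set (map fst ts) = arcs_in X en C \<and> P (arrow_word ar ts))"
    (is "?closed \<longleftrightarrow> ?open")
proof -
  have "?closed \<longleftrightarrow> (\<exists>ts. closed_traversal (insert m X) en C ((m, h, t) # ts) \<and>
      P (arrow_word ar ((m, h, t) # ts)))"
  proof
    assume ?closed
    then obtain ts where ts: "closed_traversal (insert m X) en C ts" "hd ts = (m, h, t)"
      "P (arrow_word ar ts)" by blast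
    then have "ts = (m, h, t) # tl ts" by (metis closed_traversal_def list.collapse)
    with ts show "\<exists>ts. closed_traversal (insert m X) en C ((m, h, t) # ts) \<and>
      P (arrow_word ar ((m, h, t) # ts))" by metis
  qed fastforce
  also have "\<dots> \<longleftrightarrow> ?open"
    using closed_traversal_Cons_iff[of en m h t X C, OF assms(1-4)] assms(5) by (simp add: arrow_word_def)
  finally show ?thesis .
qed

lemma wf_kdiag_passesE:
  assumes "wf_kdiag D" "c < ncross D"
  obtains p q where "p < length (code D)" "q < length (code D)"
    "code D ! p = (c, True)" "code D ! q = (c, False)"
    "\<And>i. i < length (code D) \<Longrightarrow> fst (code D ! i) = c \<Longrightarrow> i = p \<or> i = q"
proof -
  obtain p q where "p < length (code D)" "q < length (code D)"
      "code D ! p = (c, True)" "code D ! q = (c, False)"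
      and passes: "{i. i < length (code D) \<and> fst (code D ! i) = c} = {p, q}"
    using assms unfolding wf_kdiag_def by blast
  moreover have "i = p \<or> i = q" if "i < length (code D)" "fst (code D ! i) = c" for i
    using that passes by blast
  ultimately show thesis using that by blast
qed

lemma fst_code_less_ncross: "wf_kdiag D \<Longrightarrow> i < length (code D) \<Longrightarrow> fst (code D ! i) < ncross D"
  unfolding wf_kdiag_def by blast

lemma opass_upass:
  assumes "wf_kdiag D" "c < ncross D"
  shows "opass D c < length (code D)" "code D ! opass D c = (c, True)"
    and "upass D c < length (code D)" "code D ! upass D c = (c, False)"
proof -
  obtain p q where pq: "p < length (code D)" "q < length (code D)"
    "code D ! p = (c, True)" "code D ! q = (c, False)"
    "\<And>i. i < length (code D) \<Longrightarrow> fst (code D ! i) = c \<Longrightarrow> i = p \<or> i = q"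
    using wf_kdiag_passesE[OF assms] by blast
  have "opass D c = p" unfolding opass_def
    by (rule the_equality) (use pq in force)+
  moreover have "upass D c = q" unfolding upass_def
    by (rule the_equality) (use pq in force)+
  ultimately show "opass D c < length (code D)" "code D ! opass D c = (c, True)"
    "upass D c < length (code D)" "code D ! upass D c = (c, False)"
    using pq by simp_all
qed

lemma code_nth_inj:
  assumes "wf_kdiag D" "i < length (code D)" "i' < length (code D)" "code D ! i = code D ! i'"
  shows "i = i'"
proof -
  define c where "c = fst (code D ! i)"
  obtain p q where pq: "code D ! p = (c, True)" "code D ! q = (c, False)"
    "\<And>j. j < length (code D) \<Longrightarrow> fst (code D ! j) = c \<Longrightarrow> j = p \<or> j = q"
    using wf_kdiag_passesE[OF assms(1) fst_code_less_ncross[OF assms(1,2)]] c_def by blast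
  have "i = p \<or> i = q" "i' = p \<or> i' = q"
    using pq(3) assms(2,3,4) c_def by auto
  then show ?thesis using assms(4) pq(1,2) by auto
qed

lemma sum_opass_upass:
  assumes "wf_kdiag D"
  shows "(\<Sum>c<ncross D. of_bool (opass D c = j) + of_bool (upass D c = j)) =
    (of_bool (j < length (code D)) :: nat)"
proof (cases "j < length (code D)")
  case False
  then show ?thesis using opass_upass[OF assms] by auto
next
  case True
  define c0 where "c0 = fst (code D ! j)"
  have c0: "c0 < ncross D" unfolding c0_def by (rule fst_code_less_ncross[OF assms True])
  have "of_bool (opass D c = j) + of_bool (upass D c = j) = (of_bool (c = c0) :: nat)"
    if "c < ncross D" for c
  proof (cases "c = c0")
    case False
    then show ?thesis using opass_upass[OF assms that] c0_def by auto
  next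
    case True
    have "code D ! j = (c0, snd (code D ! j))" by (simp add: c0_def)
    then show ?thesis
      using True opass_upass[OF assms c0] code_nth_inj[OF assms _ \<open>j < length (code D)\<close>]
      by (cases "snd (code D ! j)") auto
  qed
  then have "(\<Sum>c<ncross D. of_bool (opass D c = j) + of_bool (upass D c = j)) =
      (\<Sum>c<ncross D. of_bool (c = c0) :: nat)"
    by (intro sum.cong) auto
  then show ?thesis using c0 True by (simp add: of_bool_def)
qed

section \<open>The arc component of a state\<close>

lemma state_arcs_eq:
  "state_arcs D S = Seg ` {..length (code D)} \<union> (\<lambda>(c, k). Sm c (c \<in> S) k) ` ({..<ncross D} \<times> UNIV)"
  unfolding state_arcs_def by auto

lemma finite_state_arcs: "finite (state_arcs D S)"
  unfolding state_arcs_eq by simp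

lemma deg_state_arcs:
  "deg (state_arcs D S) (d_ends D) P =
     (\<Sum>i\<le>length (code D). of_bool (fst (seg_ends D i) = P) + of_bool (snd (seg_ends D i) = P)) +
     (\<Sum>c<ncross D. of_bool (Out (opass D c) = P) + of_bool (In (opass D c) = P) +
        of_bool (Out (upass D c) = P) + of_bool (In (upass D c) = P))"
proof -
  let ?f = "\<lambda>x. of_bool (fst (d_ends D x) = P) + of_bool (snd (d_ends D x) = P) :: nat"
  let ?sm = "\<lambda>(c, k). Sm c (c \<in> S) k"
  have "deg (state_arcs D S) (d_ends D) P =
      sum ?f (Seg ` {..length (code D)}) + sum ?f (?sm ` ({..<ncross D} \<times> UNIV))"
    unfolding deg_def state_arcs_eq by (rule sum.union_disjoint) auto
  also have "sum ?f (Seg ` {..length (code D)}) =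
      (\<Sum>i\<le>length (code D). of_bool (fst (seg_ends D i) = P) + of_bool (snd (seg_ends D i) = P))"
    by (subst sum.reindex) (auto simp: inj_on_def d_ends_def)
  also have "sum ?f (?sm ` ({..<ncross D} \<times> UNIV)) = (\<Sum>c<ncross D. \<Sum>k\<in>UNIV. ?f (Sm c (c \<in> S) k))"
    by (subst sum.reindex) (simp_all add: inj_on_def sum.cartesian_product split_def)
  also have "\<dots> = (\<Sum>c<ncross D. of_bool (Out (opass D c) = P) + of_bool (In (opass D c) = P) +
        of_bool (Out (upass D c) = P) + of_bool (In (upass D c) = P))"
    by (intro sum.cong refl)
      (cases "c \<in> S"; cases "sgn D c"; simp add: UNIV_bool d_ends_def sm_ends_def Let_def)
  finally show ?thesis .
qed

lemma deg_Tail: "deg (state_arcs D S) (d_ends D) Tail = 1"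
proof -
  have "(\<Sum>i\<le>length (code D). of_bool (fst (seg_ends D i) = Tail) + of_bool (snd (seg_ends D i) = Tail))
      = (\<Sum>i\<le>length (code D). of_bool (i = 0) :: nat)"
    by (intro sum.cong) (auto simp: seg_ends_def)
  then show ?thesis unfolding deg_state_arcs by (simp add: of_bool_def)
qed

lemma even_deg_In:
  assumes "wf_kdiag D"
  shows "even (deg (state_arcs D S) (d_ends D) (In j))"
proof -
  have "(\<Sum>i\<le>length (code D). of_bool (fst (seg_ends D i) = In j) + of_bool (snd (seg_ends D i) = In j))
      = (\<Sum>i\<le>length (code D). of_bool (i = j \<and> j < length (code D)) :: nat)"
    by (intro sum.cong) (auto simp: seg_ends_def simp del: length_greater_0_conv length_0_conv)
  then show ?thesis
    unfolding deg_state_arcs using sum_opass_upass[OF assms, of j] by (simp add: of_bool_def)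
qed

lemma even_deg_Out:
  assumes "wf_kdiag D"
  shows "even (deg (state_arcs D S) (d_ends D) (Out j))"
proof -
  have "(\<Sum>i\<le>length (code D). of_bool (fst (seg_ends D i) = Out j) + of_bool (snd (seg_ends D i) = Out j))
      = (\<Sum>i\<le>length (code D). of_bool (i = Suc j) :: nat)"
    by (intro sum.cong) (auto simp: seg_ends_def)
  then show ?thesis
    unfolding deg_state_arcs using sum_opass_upass[OF assms, of j] by (simp add: of_bool_def)
qed

lemma Head_in_arc_comp:
  assumes "wf_kdiag D"
  shows "Head \<in> arc_comp D S"
  unfolding arc_comp_def
proof (rule odd_deg_connected[OF finite_state_arcs])
  show "odd (deg (state_arcs D S) (d_ends D) Tail)" by (simp add: deg_Tail)
  show "even (deg (state_arcs D S) (d_ends D) q)" if "q \<noteq> Tail" "q \<noteq> Head" for q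
    using that even_deg_In[OF assms] even_deg_Out[OF assms] by (cases q) auto
qed

section \<open>Boundary components of the marked ribbon graph\<close>

lemma ribbon_simps [simp]:
  "rends (ribbon D S) = d_ends D" "rarw (ribbon D S) = d_arw D" "rmark (ribbon D S) = Mk"
  "redges (ribbon D S) = {0..<ncross D}" "rsign (ribbon D S) = (\<lambda>c. c \<in> S)"
  by (simp_all add: ribbon_def)

lemma bnd_arcs_ribbon: "bnd_arcs (ribbon D S) F = insert Mk (state_arcs D (sym_diff S F))"
proof (rule set_eqI)
  show "x \<in> bnd_arcs (ribbon D S) F \<longleftrightarrow> x \<in> insert Mk (state_arcs D (sym_diff S F))" for x
    unfolding bnd_arcs_def state_arcs_def ribbon_def by (cases x) auto
qed

lemma d_ends_Mk: "d_ends D Mk = (Head, Tail)"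
  by (simp add: d_ends_def)

lemma Mk_notin_state_arcs: "Mk \<notin> state_arcs D S"
  unfolding state_arcs_def by auto

lemma Tail_Head_in_pts: "Tail \<in> pts (state_arcs D S) (d_ends D)" "Head \<in> pts (state_arcs D S) (d_ends D)"
proof -
  have "Seg 0 \<in> state_arcs D S" "Seg (length (code D)) \<in> state_arcs D S"
    unfolding state_arcs_def by auto
  then show "Tail \<in> pts (state_arcs D S) (d_ends D)" "Head \<in> pts (state_arcs D S) (d_ends D)"
    unfolding pts_def by (force simp: d_ends_def seg_ends_def)+
qed

lemma comp_of_Head_eq_arc_comp:
  "wf_kdiag D \<Longrightarrow> comp_of (state_arcs D S) (d_ends D) Head = arc_comp D S"
  using Head_in_arc_comp comp_of_eq unfolding arc_comp_def by metis

lemma comp_of_bnd_arcs_ribbon: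
  assumes "wf_kdiag D"
  shows "comp_of (bnd_arcs (ribbon D S) F) (d_ends D) p = comp_of (state_arcs D (sym_diff S F)) (d_ends D) p"
  unfolding bnd_arcs_ribbon
  using Head_in_arc_comp[OF assms] by (intro comp_of_insert[of "d_ends D" Mk Head Tail, OF d_ends_Mk]) (simp add: arc_comp_def comp_of_def)

lemma comps_bnd_arcs_ribbon:
  assumes "wf_kdiag D"
  shows "comps (bnd_arcs (ribbon D S) F) (d_ends D) = comps (state_arcs D (sym_diff S F)) (d_ends D)"
  unfolding bnd_arcs_ribbon using Head_in_arc_comp[OF assms] Tail_Head_in_pts
  by (intro comps_insert[of "d_ends D" Mk Head Tail, OF d_ends_Mk]) (simp_all add: arc_comp_def comp_of_def)

lemma marked_bcomp_ribbon:
  assumes "wf_kdiag D"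
  shows "marked_bcomp (ribbon D S) F = arc_comp D (sym_diff S F)"
  unfolding marked_bcomp_def ribbon_simps d_ends_Mk fst_conv comp_of_bnd_arcs_ribbon[OF assms]
  by (rule comp_of_Head_eq_arc_comp[OF assms])

lemma loops_ribbon:
  assumes "wf_kdiag D"
  shows "comps (bnd_arcs (ribbon D S) F) (d_ends D) - {marked_bcomp (ribbon D S) F} =
    state_loops D (sym_diff S F)"
  unfolding comps_bnd_arcs_ribbon[OF assms] marked_bcomp_ribbon[OF assms] state_loops_def ..

lemma Head_notin_state_loop:
  assumes "wf_kdiag D" "C \<in> state_loops D S"
  shows "Head \<notin> C"
proof
  assume "Head \<in> C"
  from assms(2) obtain p where "C = comp_of (state_arcs D S) (d_ends D) p" "C \<noteq> arc_comp D S"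
    unfolding state_loops_def comps_def by auto
  with \<open>Head \<in> C\<close> comp_of_eq comp_of_Head_eq_arc_comp[OF assms(1)] show False by metis
qed

lemma loop_index_ribbon:
  assumes "wf_kdiag D" "C \<in> state_loops D (sym_diff S F)"
  shows "loop_index (bnd_arcs (ribbon D S) F) (d_ends D) (d_arw D) C =
    loop_index (state_arcs D (sym_diff S F)) (d_ends D) (d_arw D) C"
  unfolding bnd_arcs_ribbon
  using Head_notin_state_loop[OF assms] by (intro loop_index_insert) (simp add: d_ends_Mk)

lemma marked_value_ribbon:
  assumes "wf_kdiag D"
  shows "marked_value (ribbon D S) F L L' = arc_value D (sym_diff S F) L L'"
proof -
  have "d_arw D Mk = None" by (simp add: d_arw_def)
  then show ?thesis
    unfolding marked_value_def arc_value_def marked_bcomp_ribbon[OF assms] ribbon_simps d_ends_Mk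
      bnd_arcs_ribbon
    using Head_in_arc_comp[OF assms] Mk_notin_state_arcs
    by (subst ex_closed_traversal_iff_ex_trail) (simp_all add: d_ends_Mk)
qed

lemma card_comps_state_arcs: "card (comps (state_arcs D S) (d_ends D)) = Suc (card (state_loops D S))"
proof -
  have "finite (comps (state_arcs D S) (d_ends D))"
    unfolding comps_def by (simp add: finite_state_arcs pts_def)
  moreover have "arc_comp D S \<in> comps (state_arcs D S) (d_ends D)"
    unfolding comps_def arc_comp_def using Tail_Head_in_pts by blast
  ultimately show ?thesis
    unfolding state_loops_def by (metis card_Suc_Diff1)
qed

section \<open>The state sum as an arrow Bollob\'as--Riordan sum\<close>

lemma prod_if_mem_eq_power:
  assumes "finite N" "T \<subseteq> N"
  shows "(\<Prod>c\<in>N. if c \<in> T then A else B) = A ^ card T * (B :: 'a::comm_monoid_mult) ^ (card N - card T)"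
proof -
  have "N \<inter> {c. c \<in> T} = T" "N \<inter> - {c. c \<in> T} = N - T" using assms(2) by auto
  then show ?thesis
    using assms by (simp add: prod.If_cases card_Diff_subset finite_subset)
qed

lemma weight_sym_diff:
  fixes A B :: "'a::field"
  assumes "finite N" "S \<subseteq> N" "F \<subseteq> N" "A \<noteq> 0" "B \<noteq> 0"
  shows "A ^ card S * B ^ (card N - card S) * (\<Prod>e\<in>F. if e \<in> S then B / A else A / B) =
    A ^ card (sym_diff S F) * B ^ (card N - card (sym_diff S F))"
proof -
  have "(\<Prod>e\<in>F. if e \<in> S then B / A else A / B) =
      (\<Prod>c\<in>N. if c \<in> F then (if c \<in> S then B / A else A / B) else 1)"
    using assms(1,3) by (simp add: prod.If_cases Int_absorb1 flip: Int_def)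
  then have "A ^ card S * B ^ (card N - card S) * (\<Prod>e\<in>F. if e \<in> S then B / A else A / B) =
      (\<Prod>c\<in>N. (if c \<in> S then A else B) * (if c \<in> F then (if c \<in> S then B / A else A / B) else 1))"
    by (simp add: prod_if_mem_eq_power[OF assms(1,2)] prod.distrib)
  also have "\<dots> = (\<Prod>c\<in>N. if c \<in> sym_diff S F then A else B)"
    using assms(4,5) by (intro prod.cong) auto
  also have "\<dots> = A ^ card (sym_diff S F) * B ^ (card N - card (sym_diff S F))"
    using assms(1-3) by (intro prod_if_mem_eq_power) auto
  finally show ?thesis .
qed

definition state_summand :: "kdiag \<Rightarrow> 'a::field \<Rightarrow> 'a \<Rightarrow> 'a \<Rightarrow>
    (nat \<Rightarrow> 'a) \<Rightarrow> (nat \<Rightarrow> 'a) \<Rightarrow> (nat \<Rightarrow> 'a) \<Rightarrow> nat set \<Rightarrow> 'a" where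
  "state_summand D A B d K L L' S = A ^ card S * B ^ (ncross D - card S) *
      (\<Prod>C \<in> state_loops D S. d * K (loop_index (state_arcs D S) (d_ends D) (d_arw D) C)) *
      arc_value D S L L'"

definition arrowBR_summand :: "('x, 'p) mrgraph \<Rightarrow> 'a::field \<Rightarrow> (nat \<Rightarrow> 'a) \<Rightarrow> 'a \<Rightarrow>
    (nat \<Rightarrow> 'a) \<Rightarrow> (nat \<Rightarrow> 'a) \<Rightarrow> (nat \<Rightarrow> 'a) \<Rightarrow> nat set \<Rightarrow> 'a" where
  "arrowBR_summand G a b c K L L' F = a ^ kcomp G F * (\<Prod>e\<in>F. b e) * c ^ bc G F *
      (\<Prod>C \<in> comps (bnd_arcs G F) (rends G) - {marked_bcomp G F}.
          K (loop_index (bnd_arcs G F) (rends G) (rarw G) C)) *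
      marked_value G F L L'"

lemma arrowBR_summand_ribbon:
  fixes A B d :: "'a::field"
  assumes "wf_kdiag D" "S \<subseteq> {0..<ncross D}" "F \<subseteq> {0..<ncross D}"
    and "A \<noteq> 0" "B \<noteq> 0" "d \<noteq> 0"
  shows "A ^ card S * B ^ (ncross D - card S) / d *
      arrowBR_summand (ribbon D S) 1 (\<lambda>e. if e \<in> S then B / A else A / B) d K L L' F =
    state_summand D A B d K L L' (sym_diff S F)"
proof -
  let ?S' = "sym_diff S F"
  let ?K = "\<Prod>C\<in>state_loops D ?S'. K (loop_index (state_arcs D ?S') (d_ends D) (d_arw D) C)"
  have loops: "(\<Prod>C \<in> comps (bnd_arcs (ribbon D S) F) (d_ends D) - {marked_bcomp (ribbon D S) F}.
      K (loop_index (bnd_arcs (ribbon D S) F) (d_ends D) (d_arw D) C)) = ?K"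
    unfolding loops_ribbon[OF assms(1)] by (intro prod.cong) (simp_all add: loop_index_ribbon[OF assms(1)])
  have bc: "d ^ bc (ribbon D S) F / d = d ^ card (state_loops D ?S')"
    using assms(6) unfolding bc_def ribbon_simps comps_bnd_arcs_ribbon[OF assms(1)] card_comps_state_arcs
    by simp
  have weight: "A ^ card S * B ^ (ncross D - card S) * (\<Prod>e\<in>F. if e \<in> S then B / A else A / B) =
      A ^ card ?S' * B ^ (ncross D - card ?S')"
    using weight_sym_diff[of "{0..<ncross D}" S F A B] assms(2-5) by simp
  have "A ^ card S * B ^ (ncross D - card S) / d *
      arrowBR_summand (ribbon D S) 1 (\<lambda>e. if e \<in> S then B / A else A / B) d K L L' F =
    (A ^ card S * B ^ (ncross D - card S) * (\<Prod>e\<in>F. if e \<in> S then B / A else A / B)) *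
      (d ^ bc (ribbon D S) F / d) * ?K * arc_value D ?S' L L'"
    unfolding arrowBR_summand_def ribbon_simps loops marked_value_ribbon[OF assms(1)] by simp
  also have "\<dots> = state_summand D A B d K L L' ?S'"
    unfolding weight bc state_summand_def by (simp add: prod.distrib)
  finally show ?thesis .
qed

lemma epos_ribbon: "S \<subseteq> {0..<ncross D} \<Longrightarrow> epos (ribbon D S) = card S"
proof -
  assume "S \<subseteq> {0..<ncross D}"
  then have "{e \<in> {0..<ncross D}. e \<in> S} = S" by auto
  then show ?thesis unfolding epos_def by simp
qed

lemma eneg_ribbon: "S \<subseteq> {0..<ncross D} \<Longrightarrow> eneg (ribbon D S) = ncross D - card S"
proof -
  assume "S \<subseteq> {0..<ncross D}"
  moreover have "{e \<in> {0..<ncross D}. e \<notin> S} = {0..<ncross D} - S" by auto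
  ultimately show ?thesis unfolding eneg_def by (simp add: card_Diff_subset finite_subset)
qed

lemma arrow_bracket_eq_arrowBR_ribbon:
  fixes A B d :: "'a::field"
  assumes "wf_kdiag D" "S \<subseteq> {0..<ncross D}" "A \<noteq> 0" "B \<noteq> 0" "d \<noteq> 0"
  shows "arrow_bracket D A B d K L L' =
    A ^ epos (ribbon D S) * B ^ eneg (ribbon D S) / d *
    arrowBR (ribbon D S) 1 (\<lambda>e. if rsign (ribbon D S) e then B / A else A / B) d K L L'"
proof -
  let ?N = "{0..<ncross D}"
  have "A ^ epos (ribbon D S) * B ^ eneg (ribbon D S) / d *
      arrowBR (ribbon D S) 1 (\<lambda>e. if rsign (ribbon D S) e then B / A else A / B) d K L L' =
    (\<Sum>F\<in>Pow ?N. A ^ card S * B ^ (ncross D - card S) / d *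
      arrowBR_summand (ribbon D S) 1 (\<lambda>e. if e \<in> S then B / A else A / B) d K L L' F)"
    unfolding epos_ribbon[OF assms(2)] eneg_ribbon[OF assms(2)] arrowBR_def arrowBR_summand_def
      sum_distrib_left by simp
  also have "\<dots> = (\<Sum>F\<in>Pow ?N. state_summand D A B d K L L' (sym_diff S F))"
    using assms by (intro sum.cong refl arrowBR_summand_ribbon) auto
  also have "\<dots> = (\<Sum>S'\<in>Pow ?N. state_summand D A B d K L L' S')"
    by (rule sum.reindex_bij_witness[of _ "sym_diff S" "sym_diff S"]) (use assms(2) in auto)
  also have "\<dots> = arrow_bracket D A B d K L L'"
    unfolding arrow_bracket_def state_summand_def ..
  finally show ?thesis ..
qed

theorem mainTheorem11:
  fixes D :: kdiag and S :: "nat set"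
    and A B d :: "'a::field" and K L L' :: "nat \<Rightarrow> 'a"
  assumes "wf_kdiag D" and "S \<subseteq> {0..<ncross D}"
    and "A \<noteq> 0" and "B \<noteq> 0" and "d \<noteq> 0"
    and "K 0 = 1" and "L 0 = 1" and "L' 0 = 1"
  shows "arrow_bracket D A B d K L L' =
           A ^ epos (ribbon D S) * B ^ eneg (ribbon D S) / d *
           arrowBR (ribbon D S) 1 (\<lambda>e. if rsign (ribbon D S) e then B / A else A / B) d K L L'
         \<and> (- (A ^ 2) - inverse A ^ 2 \<noteq> 0 \<longrightarrow>
         arrow_poly D A K L L' =
           A powi (int (epos (ribbon D S)) - int (eneg (ribbon D S))) / (- (A ^ 2) - inverse A ^ 2) *
           arrowBR (ribbon D S) 1
             (\<lambda>e. if rsign (ribbon D S) e then inverse A / A else A / inverse A)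
             (- (A ^ 2) - inverse A ^ 2) K L L')"
proof (intro conjI impI)
  show "arrow_bracket D A B d K L L' =
           A ^ epos (ribbon D S) * B ^ eneg (ribbon D S) / d *
           arrowBR (ribbon D S) 1 (\<lambda>e. if rsign (ribbon D S) e then B / A else A / B) d K L L'"
    using assms by (intro arrow_bracket_eq_arrowBR_ribbon)
  assume "- (A ^ 2) - inverse A ^ 2 \<noteq> 0"
  moreover have "A ^ epos (ribbon D S) * inverse A ^ eneg (ribbon D S) =
      A powi (int (epos (ribbon D S)) - int (eneg (ribbon D S)))"
    using assms(3) by (simp add: power_int_diff power_inverse divide_inverse)
  ultimately show "arrow_poly D A K L L' =
           A powi (int (epos (ribbon D S)) - int (eneg (ribbon D S))) / (- (A ^ 2) - inverse A ^ 2) *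
           arrowBR (ribbon D S) 1
             (\<lambda>e. if rsign (ribbon D S) e then inverse A / A else A / inverse A)
             (- (A ^ 2) - inverse A ^ 2) K L L'"
    unfolding arrow_poly_def using assms(1-3) by (simp add: arrow_bracket_eq_arrowBR_ribbon)
qed

end
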